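(* Let $\frac{4}{3}<p\le 1.73$ and $0\le\alpha\le\frac{\pi}{3}$. The function $R(\rho)=\sin^p\rho+\sin^p(\alpha-\rho)$ on $0\le\rho\le\frac{\alpha}{2}$ attains its minimum at one of the endpoints $\rho=0$ or $\rho=\frac{\alpha}{2}$. *)

theory Defs
  imports "HOL-Analysis.Analysis"
begin

end

theory Submission imports Defs begin

text \<open>
  R is in fact nonincreasing on [0, \<alpha>/2], so the minimum is attained at \<alpha>/2; only
  4/3 \<le> p is needed for this, not the upper bound on p. With r = p - 1,
  R'(\<rho>) = p (g \<rho> - g (\<alpha> - \<rho>)) for g x = sin x powr r * cos x, and g a \<le> g b whenever
  0 < a \<le> b and a + b \<le> pi/3. For r = 1/3 this is the inequality
  sin a * cos a ^ 3 \<le> sin b * cos b ^ 3, which follows from a product formula for the difference;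
  larger r only help, since sin a / sin b \<le> 1.
\<close>

lemma sin_mult_cos_cube: "sin x * cos x ^ 3 = (2 * sin (2 * x) + sin (4 * x)) / 8" for x :: real
proof -
  have "sin (4 * x) = 2 * sin (2 * x) * cos (2 * x)"
    using sin_double[of "2 * x"] by simp
  then have sin4: "sin (4 * x) = 4 * sin x * cos x * (2 * cos x ^ 2 - 1)"
    by (simp add: sin_double cos_double_cos)
  show ?thesis
    unfolding sin4 sin_double by (simp add: algebra_simps power2_eq_square power3_eq_cube)
qed

lemma sin_mult_cos_cube_diff:
  fixes a b :: real
  shows "sin b * cos b ^ 3 - sin a * cos a ^ 3 =
           sin (b - a) * (cos (a + b) + cos (2 * (a + b)) * cos (b - a)) / 2"
proof -
  have diff2: "sin (2 * b) - sin (2 * a) = 2 * sin (b - a) * cos (a + b)"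
  proof -
    have "(2 * b - 2 * a) / 2 = b - a" "(2 * b + 2 * a) / 2 = a + b"
      by simp_all
    then show ?thesis
      using sin_diff_sin[of "2 * b" "2 * a"] by metis
  qed
  have "sin (4 * b) - sin (4 * a) = 2 * sin (2 * (b - a)) * cos (2 * (a + b))"
  proof -
    have "(4 * b - 4 * a) / 2 = 2 * (b - a)" "(4 * b + 4 * a) / 2 = 2 * (a + b)"
      by simp_all
    then show ?thesis
      using sin_diff_sin[of "4 * b" "4 * a"] by metis
  qed
  then have diff4: "sin (4 * b) - sin (4 * a) = 4 * sin (b - a) * cos (b - a) * cos (2 * (a + b))"
    unfolding sin_double by simp
  show ?thesis
    unfolding sin_mult_cos_cube using diff2 diff4 by (simp add: algebra_simps)
qed

lemma sin_mult_cos_cube_le: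
  fixes a b :: real
  assumes "0 \<le> a" "a \<le> b" "a + b \<le> pi / 3"
  shows "sin a * cos a ^ 3 \<le> sin b * cos b ^ 3"
proof -
  define s d where "s = a + b" and "d = b - a"
  have s: "0 \<le> s" "s \<le> pi / 3" and d: "0 \<le> d" "d \<le> s"
    using assms by (auto simp: s_def d_def)
  have sin_d: "0 \<le> sin d"
    using d s by (intro sin_ge_zero) auto
  have cos_d: "0 \<le> cos d" "cos d \<le> 1"
    using d s by (auto intro!: cos_ge_zero)
  have cos_s: "1 / 2 \<le> cos s"
    using cos_monotone_0_pi_le[of s "pi / 3"] s by (simp add: cos_60)
  have "0 \<le> cos s + cos (2 * s) * cos d"
  proof (cases "0 \<le> cos (2 * s)")
    case True
    then show ?thesis
      using cos_s cos_d by (simp add: add_nonneg_nonneg)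
  next
    case False
    then have "cos (2 * s) \<le> cos (2 * s) * cos d"
      using cos_d mult_left_mono_neg[of "cos d" 1 "cos (2 * s)"] by simp
    moreover have "cos s + cos (2 * s) = (2 * cos s - 1) * (cos s + 1)"
      unfolding cos_double_cos by (simp add: algebra_simps power2_eq_square)
    moreover have "0 \<le> (2 * cos s - 1) * (cos s + 1)"
      using cos_s by simp
    ultimately show ?thesis
      by linarith
  qed
  then have "0 \<le> sin d * (cos s + cos (2 * s) * cos d)"
    using sin_d by simp
  then show ?thesis
    using sin_mult_cos_cube_diff[where a = a and b = b] unfolding s_def d_def by linarith
qed

lemma sin_powr_mult_cos_le:
  fixes a b r :: real
  assumes "1 / 3 \<le> r" "0 < a" "a \<le> b" "a + b \<le> pi / 3"
  shows "sin a powr r * cos a \<le> sin b powr r * cos b"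
proof -
  have "b < pi / 2"
    using assms pi_gt3 by linarith
  then have sin_a: "0 < sin a" and sin_le: "sin a \<le> sin b" and cos_a: "0 < cos a" and cos_b: "0 < cos b"
    using assms by (auto intro!: sin_gt_zero sin_monotone_2pi_le cos_gt_zero_pi)
  define x where "x = sin a / sin b"
  have x: "0 < x" "x \<le> 1"
    using sin_a sin_le by (auto simp: x_def)
  have "x \<le> (cos b / cos a) ^ 3"
    using sin_mult_cos_cube_le[of a b] assms sin_a sin_le cos_a
    by (simp add: x_def power_divide divide_simps mult.commute)
  also have "x = (x powr (1 / 3)) ^ 3"
    using x by (simp add: powr_realpow[symmetric] powr_powr)
  finally have "x powr (1 / 3) \<le> cos b / cos a"
    using x cos_a cos_b by (subst (asm) power_mono_iff) auto
  moreover have "x powr r \<le> x powr (1 / 3)"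
    using x assms by (intro powr_mono') auto
  ultimately have x_r: "x powr r \<le> cos b / cos a"
    by linarith
  have "sin a powr r * cos a = x powr r * cos a * sin b powr r"
    using sin_a sin_le by (simp add: x_def powr_divide)
  also have "\<dots> \<le> (cos b / cos a) * cos a * sin b powr r"
    using x_r cos_a by (intro mult_right_mono) auto
  also have "\<dots> = sin b powr r * cos b"
    using cos_a by simp
  finally show ?thesis .
qed

lemma has_real_derivative_sin_powr_sum:
  fixes p \<alpha> x :: real
  assumes "0 < sin x" "0 < sin (\<alpha> - x)"
  shows "((\<lambda>\<rho>. sin \<rho> powr p + sin (\<alpha> - \<rho>) powr p) has_real_derivative
           p * (sin x powr (p - 1) * cos x - sin (\<alpha> - x) powr (p - 1) * cos (\<alpha> - x))) (at x)"
proof -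
  have "((\<lambda>\<rho>. sin \<rho> powr p) has_real_derivative p * sin x powr (p - of_nat 1) * cos x) (at x)"
    by (rule DERIV_fun_powr[OF DERIV_sin assms(1)])
  moreover have "((\<lambda>\<rho>. sin (\<alpha> - \<rho>) powr p) has_real_derivative
                    p * sin (\<alpha> - x) powr (p - of_nat 1) * - cos (\<alpha> - x)) (at x)"
    by (rule DERIV_fun_powr[where g = "\<lambda>\<rho>. sin (\<alpha> - \<rho>)", OF _ assms(2)])
       (auto intro!: derivative_eq_intros)
  ultimately show ?thesis
    by (auto dest: DERIV_add simp: algebra_simps)
qed

lemma sin_powr_sum_antimono:
  fixes p \<alpha> \<rho> \<sigma> :: real
  assumes "4 / 3 \<le> p" "0 \<le> \<alpha>" "\<alpha> \<le> pi / 3" "0 \<le> \<rho>" "\<rho> \<le> \<sigma>" "\<sigma> \<le> \<alpha> / 2"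
  shows "sin \<sigma> powr p + sin (\<alpha> - \<sigma>) powr p \<le> sin \<rho> powr p + sin (\<alpha> - \<rho>) powr p"
proof (rule DERIV_nonpos_imp_decreasing_open[OF \<open>\<rho> \<le> \<sigma>\<close>])
  show "continuous_on {\<rho>..\<sigma>} (\<lambda>\<rho>. sin \<rho> powr p + sin (\<alpha> - \<rho>) powr p)"
    using assms pi_gt3
    by (intro continuous_on_add continuous_on_powr' continuous_intros) (auto intro!: sin_ge_zero)
next
  fix x
  assume x: "\<rho> < x" "x < \<sigma>"
  then have sin_pos: "0 < sin x" "0 < sin (\<alpha> - x)"
    using assms pi_gt3 by (auto intro!: sin_gt_zero)
  have "sin x powr (p - 1) * cos x \<le> sin (\<alpha> - x) powr (p - 1) * cos (\<alpha> - x)"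
    using assms x by (intro sin_powr_mult_cos_le) auto
  then have "p * (sin x powr (p - 1) * cos x - sin (\<alpha> - x) powr (p - 1) * cos (\<alpha> - x)) \<le> 0"
    using assms(1) by (simp add: mult_nonneg_nonpos)
  then show "\<exists>y. ((\<lambda>\<rho>. sin \<rho> powr p + sin (\<alpha> - \<rho>) powr p) has_real_derivative y) (at x) \<and> y \<le> 0"
    using has_real_derivative_sin_powr_sum[OF sin_pos] by blast
qed

theorem lemma2p8:
  fixes p \<alpha> :: real
  assumes "4/3 < p" and "p \<le> 1.73"
    and "0 \<le> \<alpha>" and "\<alpha> \<le> pi/3"
  defines "R \<equiv> (\<lambda>\<rho>::real. sin \<rho> powr p + sin (\<alpha> - \<rho>) powr p)"
  shows "\<exists>e \<in> {0, \<alpha>/2}. \<forall>\<rho> \<in> {0..\<alpha>/2}. R e \<le> R \<rho>"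
proof -
  have "R (\<alpha>/2) \<le> R \<rho>" if "\<rho> \<in> {0..\<alpha>/2}" for \<rho>
    unfolding R_def using that assms(1,3,4) by (intro sin_powr_sum_antimono) auto
  then show ?thesis
    by blast
qed

end
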